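(* If $X$ is an (infinite) $T_1$-space such that $nu_s(X)\le 2^{s(X)}$, then $|X|\le 2^{2^{s(X)}}$.
   Context: For a space $X$ and $A\subseteq X$, the $\theta$-closure of $A$ is $\mathrm{cl}_\theta(A):=\{y\in X:\ \overline{B}\cap A\neq\emptyset$ for every open neighborhood $B$ of $y\}$. The non-Urysohn number of $X$ with respect to singletons is $nu_s(X):=1+\sup\{|\mathrm{cl}_\theta(\{x\})|:x\in X\}$. $s(X)$ denotes the spread of $X$ (supremum of cardinalities of discrete subspaces, plus $\omega$). Throughout, "space" means infinite topological space. *)

theory Defs
  imports "HOL-Analysis.Analysis"
begin

definition theta_closure_of :: "'a topology \<Rightarrow> 'a set \<Rightarrow> 'a set" where
  "theta_closure_of X A =
     {y \<in> topspace X. \<forall>B. openin X B \<and> y \<in> B \<longrightarrow> (X closure_of B) \<inter> A \<noteq> {}}"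

definition discrete_subspace :: "'a topology \<Rightarrow> 'a set \<Rightarrow> bool" where
  "discrete_subspace X D \<longleftrightarrow> D \<subseteq> topspace X \<and> subtopology X D = discrete_topology D"

definition spread_bound :: "'a topology \<Rightarrow> 'b rel \<Rightarrow> bool" where
  "spread_bound X r \<longleftrightarrow> Card_order r \<and> (natLeq, r) \<in> ordLeq \<and>
     (\<forall>D. discrete_subspace X D \<longrightarrow> (card_of D, r) \<in> ordLeq)"

text \<open>r represents the cardinal s(X) = sup of sizes of discrete subspaces, plus omega:
  the least cardinal bound (least among cardinal orders on the same carrier type, which
  suffices since any smaller cardinal embeds into Field r).\<close>
definition is_spread :: "'a topology \<Rightarrow> 'b rel \<Rightarrow> bool" where
  "is_spread X r \<longleftrightarrow> spread_bound X r \<and>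
     (\<forall>r'::'b rel. spread_bound X r' \<longrightarrow> (r, r') \<in> ordLeq)"

text \<open>nu_s(X) = 1 + sup{|cl_theta({x})|} is at most the cardinal c.
  For every cardinal c this is equivalent to: 1 + |cl_theta({x})| \<le> c for all x
  (if the sup is finite it is attained; if infinite, 1 + sup = sup and c is infinite).\<close>
definition nus_le :: "'a topology \<Rightarrow> 'b rel \<Rightarrow> bool" where
  "nus_le X c \<longleftrightarrow>
     (\<forall>x \<in> topspace X. (BNF_Cardinal_Arithmetic.csum BNF_Cardinal_Arithmetic.cone (card_of (theta_closure_of X {x})), c) \<in> ordLeq)"

end

(*
  Let \<kappa> = s(X). For each point x, Shapirovskii's lemma applied to X - cl\<^sub>\<theta>{x} yields a discrete
  set of size at most \<kappa> and hence a family \<W>(x) of at most 2^\<kappa> open neighbourhoods of x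
  whose intersection lies in cl\<^sub>\<theta>{x}. Closing off along \<kappa>\<^sup>+ gives a set A of size at most
  2^2^\<kappa> that contains, for every E \<subseteq> A of size at most \<kappa>, the closure of E (points of cl E
  with the same trace on the subsets of E lie in each other's \<theta>-closures, so |cl E| \<le> 2^2^\<kappa>),
  the \<theta>-closures of the points of E, and a point outside cl E \<union> \<Union>\<V> for every family \<V> of at
  most \<kappa> members of the \<W>(e), e \<in> E, for which such a point exists. If p \<notin> A, pick
  W\<^sub>a \<in> \<W>(a) missing p for every a \<in> A; Shapirovskii's lemma gives a discrete D \<subseteq> A with
  A \<subseteq> cl D \<union> \<Union>{W\<^sub>d | d \<in> D}, while p shows that A contains a point outside this set.
*)
theory Submission
  imports Defs
begin

unbundle cardinal_syntax

lemmas [trans] = ordLeq_transitive ordLeq_ordIso_trans ordIso_ordLeq_trans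

lemma card_of_Pow_mono:
  assumes "|A| \<le>o |B|"
  shows "|Pow A| \<le>o |Pow B|"
proof -
  obtain f where "inj_on f A" "f ` A \<subseteq> B"
    using assms card_of_ordLeq[of A B] by blast
  then have "inj_on (image f) (Pow A)" "image f ` Pow A \<subseteq> Pow B"
    by (auto intro: inj_on_image_Pow)
  then show ?thesis
    using card_of_ordLeq by blast
qed

lemma card_of_le_Pow_Pow:
  "|K| \<le>o |Pow (Pow K)|" "|Pow K| \<le>o |Pow (Pow K)|"
  by (meson card_of_Pow ordLeq_transitive ordLess_imp_ordLeq)+

lemma card_of_Func_le_Pow_Pow:
  assumes K: "infinite K" and S: "|S| \<le>o |Pow (Pow K)|"
  shows "|Func K S| \<le>o |Pow (Pow K)|"
proof -
  obtain h where h: "inj_on h S" "h ` S \<subseteq> Pow (Pow K)"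
    using S unfolding card_of_ordLeq[symmetric] by blast
  define graph where "graph f = {(k, q). k \<in> K \<and> q \<in> h (f k)}" for f
  have "inj_on graph (Func K S)"
  proof (rule inj_onI)
    fix f g assume f: "f \<in> Func K S" and g: "g \<in> Func K S" and "graph f = graph g"
    then have "h (f k) = h (g k)" if "k \<in> K" for k
      using that by (auto simp: graph_def set_eq_iff)
    then have "f k = g k" for k
      using h(1) f g by (cases "k \<in> K") (auto simp: Func_def inj_on_def)
    then show "f = g" ..
  qed
  moreover have "graph ` Func K S \<subseteq> Pow (K \<times> Pow K)"
    using h(2) by (auto simp: graph_def Func_def)
  ultimately have "|Func K S| \<le>o |Pow (K \<times> Pow K)|"
    using card_of_ordLeq by blast
  also have "|Pow (K \<times> Pow K)| \<le>o |Pow (Pow K)|"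
    using K infinite_imp_nonempty[OF K] card_of_Times_infinite[of "Pow K" K] card_of_Pow[of K]
    by (intro card_of_Pow_mono ordIso_imp_ordLeq) (simp add: ordLess_imp_ordLeq)
  finally show ?thesis .
qed

lemma card_of_small_subsets_le_Pow_Pow:
  fixes S :: "'a set" and K :: "'b set"
  assumes K: "infinite K" and S: "|S| \<le>o |Pow (Pow K)|"
  shows "|{E. E \<subseteq> S \<and> |E| \<le>o |K|}| \<le>o |Pow (Pow K)|"
proof -
  have "{E. E \<subseteq> S \<and> |E| \<le>o |K|} \<subseteq> {{}} \<union> (\<lambda>f. f ` K) ` Func K S"
  proof
    fix E assume E: "E \<in> {E. E \<subseteq> S \<and> |E| \<le>o |K|}"
    show "E \<in> {{}} \<union> (\<lambda>f. f ` K) ` Func K S"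
    proof (cases "E = {}")
      case False
      then obtain g where "g ` K = E"
        using E card_of_ordLeq2[of E K] by blast
      then have "(\<lambda>k. if k \<in> K then g k else undefined) \<in> Func K S"
        "(\<lambda>k. if k \<in> K then g k else undefined) ` K = E"
        using E by (auto simp: Func_def)
      then show ?thesis by blast
    qed simp
  qed
  then have "|{E. E \<subseteq> S \<and> |E| \<le>o |K|}| \<le>o |{{}} \<union> (\<lambda>f. f ` K) ` Func K S|"
    by (rule card_of_mono1)
  also have "|{{}} \<union> (\<lambda>f. f ` K) ` Func K S| \<le>o |Pow (Pow K)|"
  proof (rule card_of_Un_ordLeq_infinite_Field)
    show "\<not> finite (Field |Pow (Pow K)| )"
      using K by (simp add: Field_card_of)
    show "|{{}} :: 'a set set| \<le>o |Pow (Pow K)|"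
      by (rule card_of_singl_ordLeq) blast
    show "|(\<lambda>f. f ` K) ` Func K S| \<le>o |Pow (Pow K)|"
      using card_of_image card_of_Func_le_Pow_Pow[OF K S] by (rule ordLeq_transitive)
  qed (rule card_of_Card_order)
  finally show ?thesis .
qed

lemma card_of_Field_cardSuc_le_Pow:
  "|Field (cardSuc |K| )| \<le>o |Pow K|"
proof -
  have "( |Field (cardSuc |K| )|, cardSuc |K| ) \<in> ordIso"
    by (rule card_of_Field_ordIso[OF cardSuc_Card_order[OF card_of_Card_order]])
  also have "cardSuc |K| \<le>o |Pow K|"
    by (rule cardSuc_least[OF card_of_Card_order card_of_Card_order card_of_Pow])
  finally show ?thesis .
qed

text \<open>The stages of the chain indexed by \<open>\<kappa> = |K|\<^sup>+\<close> stay of size at most \<open>|Pow (Pow K)|\<close>,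
  and regularity of \<open>\<kappa>\<close> puts every subset of the union of size at most \<open>|K|\<close> into one stage.\<close>
lemma exists_closed_under_small_subsets:
  fixes K :: "'b set" and T :: "'a set" and G :: "'a set \<Rightarrow> 'a set"
  assumes K: "infinite K"
    and G: "\<And>E. E \<subseteq> T \<Longrightarrow> |E| \<le>o |K| \<Longrightarrow> G E \<subseteq> T \<and> |G E| \<le>o |Pow (Pow K)|"
  obtains A where "A \<subseteq> T" "|A| \<le>o |Pow (Pow K)|"
    "\<And>E. E \<subseteq> A \<Longrightarrow> |E| \<le>o |K| \<Longrightarrow> G E \<subseteq> A"
proof -
  define \<kappa> where "\<kappa> = cardSuc |K|"
  have \<kappa>: "Card_order \<kappa>" "Well_order \<kappa>"
    unfolding \<kappa>_def using cardSuc_Card_order card_of_Card_order card_order_on_def by blast+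
  have Cinf_K: "Cinfinite |K|"
    using K by (simp add: cinfinite_def Field_card_of card_of_card_order_on)
  have Field_\<kappa>: "\<not> finite (Field \<kappa>)"
    using Cinfinite_cardSuc[OF Cinf_K] by (simp add: \<kappa>_def cinfinite_def)
  have infinite_\<mu>: "infinite (Pow (Pow K))"
    using K by simp
  have card_Field_\<kappa>: "|Field \<kappa>| \<le>o |Pow (Pow K)|"
    using card_of_Field_cardSuc_le_Pow card_of_le_Pow_Pow(2)
    unfolding \<kappa>_def by (rule ordLeq_transitive)
  define H where "H S = (\<Union>E \<in> {E. E \<subseteq> S \<inter> T \<and> |E| \<le>o |K|}. G E)" for S
  have card_H: "|H S| \<le>o |Pow (Pow K)|" if "|S| \<le>o |Pow (Pow K)|" for S
  proof -
    have "|S \<inter> T| \<le>o |Pow (Pow K)|"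
      using card_of_mono1[OF Int_lower1] that by (rule ordLeq_transitive)
    then show ?thesis
      unfolding H_def using G
      by (intro card_of_UNION_ordLeq_infinite[OF infinite_\<mu>]
          card_of_small_subsets_le_Pow_Pow[OF K]) auto
  qed
  have wf: "wf (\<kappa> - Id)"
    using \<kappa>(2) by (simp add: well_order_on_def)
  define As where "As = wfrec (\<kappa> - Id) (\<lambda>f i. H (\<Union> (f ` underS \<kappa> i)))"
  have As: "As i = H (\<Union> (As ` underS \<kappa> i))" for i
  proof -
    have "As i = H (\<Union> (cut As (\<kappa> - Id) i ` underS \<kappa> i))"
      unfolding As_def by (subst wfrec[OF wf]) simp
    also have "cut As (\<kappa> - Id) i ` underS \<kappa> i = As ` underS \<kappa> i"
      by (auto simp: cut_apply underS_def)
    finally show ?thesis .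
  qed
  have card_As: "|As i| \<le>o |Pow (Pow K)|" for i
  proof (induction i rule: wf_induct[OF wf])
    case (1 i)
    have "|underS \<kappa> i| \<le>o |Pow (Pow K)|"
      using card_of_mono1[OF Order_Relation.underS_Field] card_Field_\<kappa> by (rule ordLeq_transitive)
    then have "|\<Union> (As ` underS \<kappa> i)| \<le>o |Pow (Pow K)|"
      using 1 by (intro card_of_UNION_ordLeq_infinite[OF infinite_\<mu>]) (auto simp: underS_def)
    then show ?case
      by (subst As) (rule card_H)
  qed
  have chain: "relChain \<kappa> As"
    unfolding relChain_def
  proof (intro allI impI)
    fix j i assume "(j, i) \<in> \<kappa>"
    moreover have "trans \<kappa>" "antisym \<kappa>"
      using \<kappa>(2) unfolding well_order_on_def linear_order_on_def partial_order_on_def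
        preorder_on_def by blast+
    ultimately have "underS \<kappa> j \<subseteq> underS \<kappa> i"
      by (intro underS_incr)
    then have "\<Union> (As ` underS \<kappa> j) \<subseteq> \<Union> (As ` underS \<kappa> i)"
      by (rule UN_mono) simp
    then show "As j \<subseteq> As i"
      unfolding As[of i] As[of j] H_def by (intro UN_mono) auto
  qed
  define A where "A = (\<Union>i \<in> Field \<kappa>. As i)"
  have "As i \<subseteq> T" for i
    unfolding As[of i] H_def using G by blast
  then have AT: "A \<subseteq> T"
    unfolding A_def by blast
  show thesis
  proof
    show "A \<subseteq> T" by (fact AT)
    show "|A| \<le>o |Pow (Pow K)|"
      unfolding A_def using card_Field_\<kappa> card_As
      by (intro card_of_UNION_ordLeq_infinite[OF infinite_\<mu>]) auto
  next
    fix E assume E: "E \<subseteq> A" "|E| \<le>o |K|"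
    then obtain i where i: "i \<in> Field \<kappa>" "E \<subseteq> As i"
      using cardSuc_UNION_Cinfinite[OF Cinf_K, of As E] chain unfolding A_def \<kappa>_def by auto
    then obtain j where j: "j \<in> Field \<kappa>" "i \<in> underS \<kappa> j"
      using infinite_Card_order_limit[OF \<kappa>(1) Field_\<kappa> i(1)] unfolding underS_def by auto
    have "E \<subseteq> T"
      using E(1) AT by (rule order_trans)
    with i j E(2) have "G E \<subseteq> H (\<Union> (As ` underS \<kappa> j))"
      unfolding H_def by blast
    then show "G E \<subseteq> A"
      using j(1) unfolding A_def As[of j, symmetric] by blast
  qed
qed

lemma discrete_subspace_if_isolated:
  assumes "D \<subseteq> topspace X" and "\<And>d. d \<in> D \<Longrightarrow> \<exists>W. openin X W \<and> W \<inter> D = {d}"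
  shows "discrete_subspace X D"
proof -
  have "openin (subtopology X D) {d}" if "d \<in> D" for d
    using assms(2)[OF that] unfolding openin_subtopology by blast
  then show ?thesis
    using assms(1) unfolding discrete_subspace_def
    by (metis discrete_topology_unique topspace_subtopology_subset)
qed

lemma not_in_closure_of_if_disjoint_open:
  assumes "openin X V" "x \<in> V" "F \<inter> V = {}"
  shows "x \<notin> X closure_of F"
  using assms unfolding in_closure_of by blast

lemma discrete_subspace_if_left_right_separated:
  assumes D: "D \<subseteq> topspace X"
    and total: "\<And>d e. d \<in> D \<Longrightarrow> e \<in> D \<Longrightarrow> d \<noteq> e \<Longrightarrow> d \<in> underS r e \<or> e \<in> underS r d"
    and U: "\<And>d. d \<in> D \<Longrightarrow> openin X (U d) \<and> d \<in> U d"
    and left: "\<And>d. d \<in> D \<Longrightarrow> d \<notin> X closure_of (D \<inter> underS r d)"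
    and right: "\<And>d e. d \<in> D \<Longrightarrow> e \<in> D \<Longrightarrow> d \<in> underS r e \<Longrightarrow> e \<notin> U d"
  shows "discrete_subspace X D"
proof (rule discrete_subspace_if_isolated[OF D])
  fix d assume d: "d \<in> D"
  define W where "W = U d - X closure_of (D \<inter> underS r d)"
  have "openin X W"
    unfolding W_def using U[OF d] by (intro openin_diff) auto
  moreover have "e \<notin> W" if "e \<in> D" "e \<noteq> d" for e
    using total[OF that(1) d that(2)] right[OF d that(1)] closure_of_subset[of "D \<inter> underS r d" X] D that(1)
    unfolding W_def by blast
  moreover have "d \<in> W"
    unfolding W_def using U[OF d] left[OF d] by blast
  ultimately show "\<exists>W. openin X W \<and> W \<inter> D = {d}"
    using d by blast
qed

text \<open>Shapirovskii's lemma: well-order the space and pick every point of \<open>Y\<close> that lies neither in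
  the closure nor in the neighbourhoods of the points picked before it.\<close>
lemma sapirovskii_discrete_cover:
  assumes Y: "Y \<subseteq> topspace X" and U: "\<And>y. y \<in> Y \<Longrightarrow> openin X (U y) \<and> y \<in> U y"
  obtains D where "D \<subseteq> Y" "discrete_subspace X D" "Y \<subseteq> X closure_of D \<union> (\<Union>d\<in>D. U d)"
proof -
  have "\<exists>r :: 'a rel. Well_order r \<and> Field r = UNIV"
    by (rule well_ordering)
  then obtain r :: "'a rel" where r: "Well_order r" "Field r = UNIV"
    by blast
  have wf: "wf (r - Id)"
    using r(1) by (simp add: well_order_on_def)
  define pick where "pick = wfrec (r - Id) (\<lambda>f y. y \<in> Y
      \<and> y \<notin> X closure_of {z \<in> underS r y. f z} \<and> (\<forall>z \<in> underS r y. f z \<longrightarrow> y \<notin> U z))"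
  define D where "D = {y. pick y}"
  have pick: "y \<in> D \<longleftrightarrow> y \<in> Y \<and> y \<notin> X closure_of (D \<inter> underS r y)
      \<and> (\<forall>z \<in> D \<inter> underS r y. y \<notin> U z)" for y
  proof -
    have cut: "cut pick (r - Id) y z = pick z" if "z \<in> underS r y" for z
      using that by (simp add: cut_apply underS_def)
    have "pick y \<longleftrightarrow> y \<in> Y \<and> y \<notin> X closure_of {z \<in> underS r y. cut pick (r - Id) y z}
        \<and> (\<forall>z \<in> underS r y. cut pick (r - Id) y z \<longrightarrow> y \<notin> U z)"
      unfolding pick_def by (subst wfrec[OF wf]) simp
    also have "{z \<in> underS r y. cut pick (r - Id) y z} = D \<inter> underS r y"
      using cut by (auto simp: D_def)
    finally show ?thesis
      using cut by (auto simp: D_def)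
  qed
  have DY: "D \<subseteq> Y"
    using pick by blast
  have left: "d \<notin> X closure_of (D \<inter> underS r d)" if "d \<in> D" for d
    using pick[of d] that by simp
  have right: "e \<notin> U d" if "d \<in> D" "e \<in> D" "d \<in> underS r e" for d e
    using pick[of e] that by simp
  show thesis
  proof
    show "D \<subseteq> Y" by (fact DY)
    have total: "d \<in> underS r e \<or> e \<in> underS r d" if "d \<noteq> e" for d e
      using r that by (auto simp: underS_def well_order_on_def linear_order_on_def total_on_def)
    show "discrete_subspace X D"
    proof (rule discrete_subspace_if_left_right_separated[of D X r U])
      show "D \<subseteq> topspace X"
        using DY Y by (rule order_trans)
      show "openin X (U d) \<and> d \<in> U d" if "d \<in> D" for d
        using U DY that by blast
      show "d \<in> underS r e \<or> e \<in> underS r d" if "d \<noteq> e" for d e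
        using that by (rule total)
      show "d \<notin> X closure_of (D \<inter> underS r d)" if "d \<in> D" for d
        using that by (rule left)
      show "e \<notin> U d" if "d \<in> D" "e \<in> D" "d \<in> underS r e" for d e
        using that by (rule right)
    qed
    show "Y \<subseteq> X closure_of D \<union> (\<Union>d\<in>D. U d)"
    proof
      fix y assume y: "y \<in> Y"
      show "y \<in> X closure_of D \<union> (\<Union>d\<in>D. U d)"
      proof (cases "y \<in> D")
        case True
        then show ?thesis
          using closure_of_subset[of D X] DY Y by blast
      next
        case False
        then have "y \<in> X closure_of (D \<inter> underS r y) \<or> (\<exists>z \<in> D \<inter> underS r y. y \<in> U z)"
          using pick[of y] y by simp
        moreover have "X closure_of (D \<inter> underS r y) \<subseteq> X closure_of D"
          by (rule closure_of_mono) simp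
        ultimately show ?thesis
          by blast
      qed
    qed
  qed
qed

lemma theta_closure_of_subset_topspace: "theta_closure_of X A \<subseteq> topspace X"
  unfolding theta_closure_of_def by blast

lemma disjoint_open_if_notin_theta_closure_of:
  assumes "x \<in> topspace X" "y \<in> topspace X" "y \<notin> theta_closure_of X {x}"
  obtains U V where "openin X U" "openin X V" "y \<in> U" "x \<in> V" "U \<inter> V = {}"
proof -
  obtain B where B: "openin X B" "y \<in> B" "x \<notin> X closure_of B"
    using assms unfolding theta_closure_of_def by blast
  then obtain V where "openin X V" "x \<in> V" "V \<inter> B = {}"
    using assms(1) unfolding in_closure_of by blast
  with B that show thesis by blast
qed

lemma in_theta_closure_of_if_trace_le:
  assumes z: "z \<in> X closure_of E" and z0: "z0 \<in> topspace X"
    and trace: "\<And>F. F \<subseteq> E \<Longrightarrow> z \<in> X closure_of F \<Longrightarrow> z0 \<in> X closure_of F"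
  shows "z \<in> theta_closure_of X {z0}"
proof (rule ccontr)
  assume "z \<notin> theta_closure_of X {z0}"
  moreover have "z \<in> topspace X"
    using closure_of_subset_topspace[of X E] z by blast
  ultimately obtain U V where UV: "openin X U" "openin X V" "z \<in> U" "z0 \<in> V" "U \<inter> V = {}"
    using disjoint_open_if_notin_theta_closure_of[OF z0] by blast
  have "z \<in> X closure_of (U \<inter> E)"
    using openin_Int_closure_of_subset[OF UV(1), of E] z UV(3) by blast
  then have "z0 \<in> X closure_of (U \<inter> E)"
    by (rule trace[rotated]) blast
  moreover have "z0 \<notin> X closure_of (U \<inter> E)"
    using UV(5) by (intro not_in_closure_of_if_disjoint_open[OF UV(2,4)]) blast
  ultimately show False by blast
qed

lemma card_closure_of_le_Pow_Pow:
  fixes K :: "'b set"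
  assumes K: "infinite K" and E: "|E| \<le>o |K|"
    and theta: "\<And>x. x \<in> topspace X \<Longrightarrow> |theta_closure_of X {x}| \<le>o |Pow K|"
  shows "|X closure_of E| \<le>o |Pow (Pow K)|"
proof -
  define C where "C = X closure_of E"
  define trace where "trace z = {F. F \<subseteq> E \<and> z \<in> X closure_of F}" for z
  have "trace ` C \<subseteq> Pow (Pow E)"
    unfolding trace_def by blast
  then have "|trace ` C| \<le>o |Pow (Pow E)|"
    by (rule card_of_mono1)
  also have "|Pow (Pow E)| \<le>o |Pow (Pow K)|"
    using E by (intro card_of_Pow_mono)
  finally have card_traces: "|trace ` C| \<le>o |Pow (Pow K)|" .
  have card_fibre: "|{z \<in> C. trace z = P}| \<le>o |Pow (Pow K)|" if P: "P \<in> trace ` C" for P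
  proof -
    obtain z0 where z0: "z0 \<in> C" "trace z0 = P"
      using P by blast
    have z0_space: "z0 \<in> topspace X"
      using closure_of_subset_topspace[of X E] z0(1) unfolding C_def by blast
    have "{z \<in> C. trace z = P} \<subseteq> theta_closure_of X {z0}"
    proof
      fix z assume "z \<in> {z \<in> C. trace z = P}"
      then show "z \<in> theta_closure_of X {z0}"
        using z0 unfolding C_def
        by (intro in_theta_closure_of_if_trace_le[OF _ z0_space]) (auto simp: trace_def)
    qed
    then have "|{z \<in> C. trace z = P}| \<le>o |theta_closure_of X {z0}|"
      by (rule card_of_mono1)
    also have "|theta_closure_of X {z0}| \<le>o |Pow K|"
      by (rule theta[OF z0_space])
    also have "|Pow K| \<le>o |Pow (Pow K)|"
      by (rule card_of_le_Pow_Pow(2))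
    finally show ?thesis .
  qed
  have "C = (\<Union>P \<in> trace ` C. {z \<in> C. trace z = P})"
    by blast
  also have "|\<Union>P \<in> trace ` C. {z \<in> C. trace z = P}| \<le>o |Pow (Pow K)|"
    using K card_traces card_fibre by (intro card_of_UNION_ordLeq_infinite) auto
  finally show ?thesis
    unfolding C_def .
qed

lemma exists_neighbourhoods_Inter_subset_theta_closure_of:
  fixes K :: "'b set"
  assumes K: "infinite K" and x: "x \<in> topspace X"
    and spread: "\<And>D. discrete_subspace X D \<Longrightarrow> |D| \<le>o |K|"
  shows "\<exists>\<W>. |\<W>| \<le>o |Pow K| \<and> (\<forall>W \<in> \<W>. openin X W \<and> x \<in> W)
    \<and> topspace X \<inter> \<Inter>\<W> \<subseteq> theta_closure_of X {x}"
proof -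
  define Y where "Y = topspace X - theta_closure_of X {x}"
  have "\<forall>y \<in> Y. \<exists>V. openin X V \<and> y \<in> V \<and> x \<notin> X closure_of V"
  proof
    fix y assume "y \<in> Y"
    then obtain U V where UV: "openin X U" "openin X V" "y \<in> U" "x \<in> V" "U \<inter> V = {}"
      using disjoint_open_if_notin_theta_closure_of[OF x] unfolding Y_def by blast
    moreover have "x \<notin> X closure_of U"
      by (rule not_in_closure_of_if_disjoint_open[OF UV(2,4,5)])
    ultimately show "\<exists>V. openin X V \<and> y \<in> V \<and> x \<notin> X closure_of V"
      by blast
  qed
  then have "\<exists>V. \<forall>y \<in> Y. openin X (V y) \<and> y \<in> V y \<and> x \<notin> X closure_of (V y)"
    by (rule bchoice)
  then obtain V where V: "\<forall>y \<in> Y. openin X (V y) \<and> y \<in> V y \<and> x \<notin> X closure_of (V y)" ..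
  have "Y \<subseteq> topspace X" "\<And>y. y \<in> Y \<Longrightarrow> openin X (V y) \<and> y \<in> V y"
    using V unfolding Y_def by blast+
  then obtain D where D: "D \<subseteq> Y" "discrete_subspace X D" "Y \<subseteq> X closure_of D \<union> (\<Union>d\<in>D. V d)"
    by (rule sapirovskii_discrete_cover)
  have card_D: "|D| \<le>o |K|"
    using spread D(2) .
  \<comment> \<open>A point of \<open>Y\<close> lies in some \<open>V d\<close> or in the closure of the trace on \<open>D\<close> of a
    neighbourhood disjoint from one of \<open>x\<close>.\<close>
  define \<F> where "\<F> = {F \<in> V ` D \<union> Pow D. x \<notin> X closure_of F}"
  define \<W> where "\<W> = (\<lambda>F. topspace X - X closure_of F) ` \<F>"
  have "|V ` D \<union> Pow D| \<le>o |Pow K|"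
  proof (rule card_of_Un_ordLeq_infinite_Field)
    have "|V ` D| \<le>o |K|"
      using card_of_image card_D by (rule ordLeq_transitive)
    then show "|V ` D| \<le>o |Pow K|"
      using ordLess_imp_ordLeq[OF card_of_Pow] by (rule ordLeq_transitive)
    show "|Pow D| \<le>o |Pow K|"
      using card_D by (rule card_of_Pow_mono)
  qed (use K in \<open>simp_all add: Field_card_of card_of_card_order_on\<close>)
  have "|\<W>| \<le>o |\<F>|"
    unfolding \<W>_def by (rule card_of_image)
  also have "|\<F>| \<le>o |V ` D \<union> Pow D|"
    unfolding \<F>_def by (rule card_of_mono1) blast
  finally have "|\<W>| \<le>o |Pow K|"
    using \<open>|V ` D \<union> Pow D| \<le>o |Pow K|\<close> by (rule ordLeq_transitive)
  moreover have "\<forall>W \<in> \<W>. openin X W \<and> x \<in> W"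
    unfolding \<W>_def \<F>_def using x by auto
  moreover have "p \<in> theta_closure_of X {x}" if p: "p \<in> topspace X" "p \<in> \<Inter>\<W>" for p
  proof (rule ccontr)
    assume "p \<notin> theta_closure_of X {x}"
    then have "p \<in> Y"
      unfolding Y_def using p(1) by blast
    have "\<exists>F \<in> \<F>. p \<in> X closure_of F"
    proof (cases "\<exists>d \<in> D. p \<in> V d")
      case True
      then obtain d where d: "d \<in> D" "p \<in> V d" by blast
      then have "V d \<in> \<F>"
        using V D(1) unfolding \<F>_def by blast
      moreover have "p \<in> X closure_of (V d)"
        using V d D(1) p(1) closure_of_subset openin_subset by (metis subsetD)
      ultimately show ?thesis by blast
    next
      case False
      then have "p \<in> X closure_of D"
        using D(3) \<open>p \<in> Y\<close> by blast
      obtain U V' where UV: "openin X U" "openin X V'" "p \<in> U" "x \<in> V'" "U \<inter> V' = {}"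
        using disjoint_open_if_notin_theta_closure_of[OF x p(1)] \<open>p \<notin> _\<close> by blast
      have "p \<in> X closure_of (U \<inter> D)"
        using openin_Int_closure_of_subset[OF UV(1)] \<open>p \<in> X closure_of D\<close> UV(3) by blast
      moreover have "x \<notin> X closure_of (U \<inter> D)"
        using UV(5) by (intro not_in_closure_of_if_disjoint_open[OF UV(2,4)]) blast
      then have "U \<inter> D \<in> \<F>"
        unfolding \<F>_def by blast
      ultimately show ?thesis by blast
    qed
    then show False
      using p(2) unfolding \<W>_def by blast
  qed
  ultimately show ?thesis
    by blast
qed

definition closing_step :: "'a topology \<Rightarrow> ('a \<Rightarrow> 'a set set) \<Rightarrow> 'b set \<Rightarrow> 'a set \<Rightarrow> 'a set"
  where "closing_step X \<W> K E =
    X closure_of E \<union> (\<Union>e \<in> E. theta_closure_of X {e}) \<union>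
    (\<lambda>\<V>. SOME q. q \<in> topspace X - (X closure_of E \<union> \<Union>\<V>)) `
      {\<V>. \<V> \<subseteq> (\<Union>e \<in> E. \<W> e) \<and> |\<V>| \<le>o |K| \<and> \<not> topspace X \<subseteq> X closure_of E \<union> \<Union>\<V>}"

lemma some_in_Diff_if_not_subset: "\<not> A \<subseteq> B \<Longrightarrow> (SOME q. q \<in> A - B) \<in> A - B"
  by (rule someI_ex) blast

lemma closing_step_subset_topspace: "closing_step X \<W> K E \<subseteq> topspace X"
proof -
  have "(\<Union>e \<in> E. theta_closure_of X {e}) \<subseteq> topspace X"
    by (intro UN_least theta_closure_of_subset_topspace)
  moreover have "(SOME q. q \<in> topspace X - (X closure_of E \<union> \<Union>\<V>)) \<in> topspace X"
    if "\<not> topspace X \<subseteq> X closure_of E \<union> \<Union>\<V>" for \<V>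
    using some_in_Diff_if_not_subset[OF that] by (rule DiffD1)
  ultimately show ?thesis
    unfolding closing_step_def using closure_of_subset_topspace[of X E] by blast
qed

lemma closure_of_subset_closing_step: "X closure_of E \<subseteq> closing_step X \<W> K E"
  unfolding closing_step_def by blast

lemma theta_closure_of_subset_closing_step:
  "e \<in> E \<Longrightarrow> theta_closure_of X {e} \<subseteq> closing_step X \<W> K E"
  unfolding closing_step_def by blast

lemma closing_step_witness:
  assumes "\<V> \<subseteq> (\<Union>e \<in> E. \<W> e)" "|\<V>| \<le>o |K|" "\<not> topspace X \<subseteq> X closure_of E \<union> \<Union>\<V>"
  shows "\<exists>q \<in> closing_step X \<W> K E. q \<notin> X closure_of E \<union> \<Union>\<V>"
proof (rule bexI)
  show "(SOME q. q \<in> topspace X - (X closure_of E \<union> \<Union>\<V>)) \<in> closing_step X \<W> K E"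
    unfolding closing_step_def using assms by (intro UnI2 rev_image_eqI[of \<V>]) auto
  show "(SOME q. q \<in> topspace X - (X closure_of E \<union> \<Union>\<V>)) \<notin> X closure_of E \<union> \<Union>\<V>"
    using some_in_Diff_if_not_subset[OF assms(3)] by blast
qed

lemma card_closing_step_le_Pow_Pow:
  fixes K :: "'b set"
  assumes K: "infinite K" and E: "|E| \<le>o |K|"
    and theta: "\<And>x. x \<in> topspace X \<Longrightarrow> |theta_closure_of X {x}| \<le>o |Pow K|"
    and \<W>: "\<And>e. e \<in> E \<Longrightarrow> |\<W> e| \<le>o |Pow K|"
    and E_space: "E \<subseteq> topspace X"
  shows "|closing_step X \<W> K E| \<le>o |Pow (Pow K)|"
proof -
  have infinite_\<mu>: "\<not> finite (Field |Pow (Pow K)| )"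
    using K by (simp add: Field_card_of)
  have card_E: "|E| \<le>o |Pow (Pow K)|"
    using E card_of_le_Pow_Pow(1) by (rule ordLeq_transitive)
  have "|theta_closure_of X {e}| \<le>o |Pow (Pow K)|" if "e \<in> E" for e
  proof -
    have "e \<in> topspace X"
      using that E_space by blast
    then have "|theta_closure_of X {e}| \<le>o |Pow K|"
      by (rule theta)
    then show ?thesis
      using card_of_le_Pow_Pow(2) by (rule ordLeq_transitive)
  qed
  then have card_thetas: "|\<Union>e \<in> E. theta_closure_of X {e}| \<le>o |Pow (Pow K)|"
    using K card_E by (intro card_of_UNION_ordLeq_infinite) auto
  have "|\<W> e| \<le>o |Pow (Pow K)|" if "e \<in> E" for e
    using \<W>[OF that] card_of_le_Pow_Pow(2) by (rule ordLeq_transitive)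
  then have "|\<Union>e \<in> E. \<W> e| \<le>o |Pow (Pow K)|"
    using K card_E by (intro card_of_UNION_ordLeq_infinite) auto
  then have card_families: "|{\<V>. \<V> \<subseteq> (\<Union>e \<in> E. \<W> e) \<and> |\<V>| \<le>o |K|}| \<le>o |Pow (Pow K)|"
    by (rule card_of_small_subsets_le_Pow_Pow[OF K])
  let ?witness = "\<lambda>\<V>. SOME q. q \<in> topspace X - (X closure_of E \<union> \<Union>\<V>)"
  let ?families = "{\<V>. \<V> \<subseteq> (\<Union>e \<in> E. \<W> e) \<and> |\<V>| \<le>o |K|
    \<and> \<not> topspace X \<subseteq> X closure_of E \<union> \<Union>\<V>}"
  have "|?witness ` ?families| \<le>o |?families|"
    by (rule card_of_image)
  also have "|?families| \<le>o |{\<V>. \<V> \<subseteq> (\<Union>e \<in> E. \<W> e) \<and> |\<V>| \<le>o |K|}|"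
    by (rule card_of_mono1) blast
  also note card_families
  finally have card_witnesses: "|?witness ` ?families| \<le>o |Pow (Pow K)|" .
  have "|X closure_of E \<union> (\<Union>e \<in> E. theta_closure_of X {e})| \<le>o |Pow (Pow K)|"
    using infinite_\<mu> card_closure_of_le_Pow_Pow[OF K E theta] card_thetas card_of_Card_order
    by (rule card_of_Un_ordLeq_infinite_Field)
  with infinite_\<mu> show ?thesis
    unfolding closing_step_def
    using card_witnesses card_of_Card_order by (rule card_of_Un_ordLeq_infinite_Field)
qed

lemma topspace_subset_if_closing_step_closed:
  fixes K :: "'b set"
  assumes K: "K \<noteq> {}"
    and spread: "\<And>D. discrete_subspace X D \<Longrightarrow> |D| \<le>o |K|"
    and \<W>_open: "\<And>a W. a \<in> A \<Longrightarrow> W \<in> \<W> a \<Longrightarrow> openin X W \<and> a \<in> W"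
    and \<W>_Inter: "\<And>a. a \<in> A \<Longrightarrow> topspace X \<inter> \<Inter>(\<W> a) \<subseteq> theta_closure_of X {a}"
    and A: "A \<subseteq> topspace X"
    and closed: "\<And>E. E \<subseteq> A \<Longrightarrow> |E| \<le>o |K| \<Longrightarrow> closing_step X \<W> K E \<subseteq> A"
  shows "topspace X \<subseteq> A"
proof
  fix p assume p: "p \<in> topspace X"
  show "p \<in> A"
  proof (rule ccontr)
    assume "p \<notin> A"
    have "\<exists>W. W \<in> \<W> a \<and> p \<notin> W" if a: "a \<in> A" for a
    proof -
      have "closing_step X \<W> K {a} \<subseteq> A"
        using a K by (intro closed) (auto intro: card_of_singl_ordLeq)
      then have "p \<notin> theta_closure_of X {a}"
        using theta_closure_of_subset_closing_step[of a "{a}"] \<open>p \<notin> A\<close> by blast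
      then show ?thesis
        using \<W>_Inter[OF a] p by blast
    qed
    then have "\<exists>W. \<forall>a \<in> A. W a \<in> \<W> a \<and> p \<notin> W a"
      by (intro bchoice) blast
    then obtain W where W: "\<forall>a \<in> A. W a \<in> \<W> a \<and> p \<notin> W a" ..
    have "openin X (W a) \<and> a \<in> W a" if "a \<in> A" for a
      using W \<W>_open that by blast
    with A obtain D where D: "D \<subseteq> A" "discrete_subspace X D" "A \<subseteq> X closure_of D \<union> (\<Union>d\<in>D. W d)"
      by (rule sapirovskii_discrete_cover)
    have card_D: "|D| \<le>o |K|"
      using spread D(2) .
    have "X closure_of D \<subseteq> A"
      using closure_of_subset_closing_step closed[OF D(1) card_D] by (rule order_trans)
    then have p_notin: "p \<notin> X closure_of D \<union> \<Union>(W ` D)"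
      using W D(1) \<open>p \<notin> A\<close> by blast
    have "W ` D \<subseteq> (\<Union>d \<in> D. \<W> d)"
      using W D(1) by blast
    moreover have "|W ` D| \<le>o |K|"
      using card_of_image card_D by (rule ordLeq_transitive)
    moreover have "\<not> topspace X \<subseteq> X closure_of D \<union> \<Union>(W ` D)"
      using p p_notin by blast
    ultimately have "\<exists>q \<in> closing_step X \<W> K D. q \<notin> X closure_of D \<union> \<Union>(W ` D)"
      by (rule closing_step_witness)
    then obtain q where "q \<in> closing_step X \<W> K D" "q \<notin> X closure_of D \<union> \<Union>(W ` D)"
      by blast
    then show False
      using closed[OF D(1) card_D] D(3) by blast
  qed
qed

lemma card_topspace_le_Pow_Pow:
  fixes X :: "'a topology" and K :: "'b set"
  assumes K: "infinite K"
    and spread: "\<And>D. discrete_subspace X D \<Longrightarrow> |D| \<le>o |K|"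
    and theta: "\<And>x. x \<in> topspace X \<Longrightarrow> |theta_closure_of X {x}| \<le>o |Pow K|"
  shows "|topspace X| \<le>o |Pow (Pow K)|"
proof -
  have "\<forall>x \<in> topspace X. \<exists>\<W>. |\<W>| \<le>o |Pow K| \<and> (\<forall>W \<in> \<W>. openin X W \<and> x \<in> W)
      \<and> topspace X \<inter> \<Inter>\<W> \<subseteq> theta_closure_of X {x}"
    using exists_neighbourhoods_Inter_subset_theta_closure_of[OF K _ spread] by blast
  then have "\<exists>\<W>. \<forall>x \<in> topspace X. |\<W> x| \<le>o |Pow K| \<and> (\<forall>W \<in> \<W> x. openin X W \<and> x \<in> W)
      \<and> topspace X \<inter> \<Inter>(\<W> x) \<subseteq> theta_closure_of X {x}"
    by (rule bchoice)
  then obtain \<W> where \<W>: "\<forall>x \<in> topspace X. |\<W> x| \<le>o |Pow K|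
      \<and> (\<forall>W \<in> \<W> x. openin X W \<and> x \<in> W) \<and> topspace X \<inter> \<Inter>(\<W> x) \<subseteq> theta_closure_of X {x}" ..
  have step_bounds: "closing_step X \<W> K E \<subseteq> topspace X \<and> |closing_step X \<W> K E| \<le>o |Pow (Pow K)|"
    if E: "E \<subseteq> topspace X" "|E| \<le>o |K|" for E
  proof
    show "closing_step X \<W> K E \<subseteq> topspace X"
      by (rule closing_step_subset_topspace)
    show "|closing_step X \<W> K E| \<le>o |Pow (Pow K)|"
      using K E(2) theta by (rule card_closing_step_le_Pow_Pow) (use \<W> E(1) in blast)+
  qed
  obtain A where A: "A \<subseteq> topspace X" "|A| \<le>o |Pow (Pow K)|"
    and closed: "\<And>E. E \<subseteq> A \<Longrightarrow> |E| \<le>o |K| \<Longrightarrow> closing_step X \<W> K E \<subseteq> A"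
    using exists_closed_under_small_subsets[where G = "closing_step X \<W> K", OF K step_bounds]
    by blast
  have "topspace X \<subseteq> A"
  proof (rule topspace_subset_if_closing_step_closed[OF infinite_imp_nonempty[OF K] spread _ _ A(1) closed])
    show "openin X W \<and> a \<in> W" if "a \<in> A" "W \<in> \<W> a" for a W
      using \<W> A(1) that by blast
    show "topspace X \<inter> \<Inter>(\<W> a) \<subseteq> theta_closure_of X {a}" if "a \<in> A" for a
      using \<W> A(1) that by blast
  qed
  then have "|topspace X| \<le>o |A|"
    by (rule card_of_mono1)
  then show ?thesis
    using A(2) by (rule ordLeq_transitive)
qed

lemma card_theta_closure_of_le_if_nus_le:
  assumes "nus_le X c" "x \<in> topspace X"
  shows "|theta_closure_of X {x}| \<le>o c"
proof -
  have "|theta_closure_of X {x}| \<le>o BNF_Cardinal_Arithmetic.cone +c |theta_closure_of X {x}|"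
    by (rule ordLeq_csum2[OF card_of_Card_order])
  also have "BNF_Cardinal_Arithmetic.cone +c |theta_closure_of X {x}| \<le>o c"
    using assms unfolding nus_le_def by blast
  finally show ?thesis .
qed

lemma Pow_Field_ordIso_cexp_ctwo: "( |Pow (Field r)|, ctwo ^c r) \<in> ordIso"
  unfolding ctwo_def cexp_def Field_card_of by (rule card_of_Pow_Func)

theorem corollary3p13:
  fixes X :: "'a topology" and s :: "'b rel"
  assumes "infinite (topspace X)"
    and "t1_space X"
    and "is_spread X s"
    and "nus_le X (BNF_Cardinal_Arithmetic.cexp BNF_Cardinal_Arithmetic.ctwo s)"
  shows "(card_of (topspace X), BNF_Cardinal_Arithmetic.cexp BNF_Cardinal_Arithmetic.ctwo (BNF_Cardinal_Arithmetic.cexp BNF_Cardinal_Arithmetic.ctwo s)) \<in> ordLeq"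
proof -
  define K where "K = Field s"
  have s: "Card_order s" "natLeq \<le>o s" "\<And>D. discrete_subspace X D \<Longrightarrow> |D| \<le>o s"
    using assms(3) unfolding is_spread_def spread_bound_def by blast+
  have s_K: "(s, |K| ) \<in> ordIso"
    unfolding K_def using card_of_Field_ordIso[OF s(1)] by (rule ordIso_symmetric)
  have "infinite K"
    using infinite_iff_natLeq_ordLeq ordLeq_ordIso_trans[OF s(2) s_K] by blast
  moreover have "|D| \<le>o |K|" if "discrete_subspace X D" for D
    using s(3)[OF that] ordIso_imp_ordLeq[OF s_K] by (rule ordLeq_transitive)
  moreover have "|theta_closure_of X {x}| \<le>o |Pow K|" if "x \<in> topspace X" for x
    using card_theta_closure_of_le_if_nus_le[OF assms(4) that]
      ordIso_symmetric[OF Pow_Field_ordIso_cexp_ctwo]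
    unfolding K_def by (rule ordLeq_ordIso_trans)
  ultimately have "|topspace X| \<le>o |Pow (Pow K)|"
    by (rule card_topspace_le_Pow_Pow)
  also have "|Pow (Pow K)| \<le>o |Pow (Field (ctwo ^c s))|"
    unfolding K_def cexp_def ctwo_def Field_card_of
    by (intro card_of_Pow_mono ordIso_imp_ordLeq card_of_Pow_Func)
  also have "( |Pow (Field (ctwo ^c s))|, ctwo ^c (ctwo ^c s)) \<in> ordIso"
    by (rule Pow_Field_ordIso_cexp_ctwo)
  finally show ?thesis .
qed

end
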